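(* Let $(X,\widetilde{\tau}_X,\mathfrak{a}_E,E)$ and $(Y,\widetilde{\tau}_Y,\mathfrak{b}_K,K)$ be soft aura topological spaces and $f_{up}$ a soft mapping from $(X,E)$ to $(Y,K)$. If $f_{up}$ is soft $\mathfrak{a}$-continuous then it is soft $\mathfrak{a}$-$\alpha$-continuous; if it is soft $\mathfrak{a}$-$\alpha$-continuous then it is both soft $\mathfrak{a}$-semi-continuous and soft $\mathfrak{a}$-pre-continuous; and if it is soft $\mathfrak{a}$-semi-continuous or soft $\mathfrak{a}$-pre-continuous then it is soft $\mathfrak{a}$-$\beta$-continuous.
   Context: For a nonempty set $X$ and nonempty parameter set $E$, a soft set is a map $F:E\to\mathcal{P}(X)$, written $(F,E)$; $\mathrm{SS}(X,E)$ denotes all soft sets; $\sqsubseteq$, $\sqcup$ are parameterwise. A soft topology on $X$ over $E$ is a subfamily of $\mathrm{SS}(X,E)$ containing the soft sets with all values $\emptyset$ and all values $X$, closed under arbitrary soft unions and finite soft intersections. A soft scope function is a map $\mathfrak{a}_E:X\to\widetilde{\tau}_X$ with $x\in\mathfrak{a}_E(x)(e)$ for all $x,e$; $(X,\widetilde{\tau}_X,\mathfrak{a}_E,E)$ is a soft aura topological space (similarly $(Y,\widetilde{\tau}_Y,\mathfrak{b}_K,K)$). $\mathrm{cl}_{\mathfrak{a}}(G,E)(e)=\{x:\mathfrak{a}_E(x)(e)\cap G(e)\neq\emptyset\}$, $\mathrm{int}_{\mathfrak{a}}(G,E)(e)=\{x:\mathfrak{a}_E(x)(e)\subseteq G(e)\}$;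 analogously $\mathrm{int}_{\mathfrak{b}}$ on $Y$ using $\mathfrak{b}_K$. $(G,E)$ is soft $\mathfrak{a}$-open if $\mathrm{int}_{\mathfrak{a}}(G,E)=(G,E)$ (similarly soft $\mathfrak{b}$-open in $Y$); soft $\mathfrak{a}$-semi-open if $(G,E)\sqsubseteq\mathrm{cl}_{\mathfrak{a}}(\mathrm{int}_{\mathfrak{a}}(G,E))$; soft $\mathfrak{a}$-pre-open if $(G,E)\sqsubseteq\mathrm{int}_{\mathfrak{a}}(\mathrm{cl}_{\mathfrak{a}}(G,E))$; soft $\mathfrak{a}$-$\alpha$-open if $(G,E)\sqsubseteq\mathrm{int}_{\mathfrak{a}}(\mathrm{cl}_{\mathfrak{a}}(\mathrm{int}_{\mathfrak{a}}(G,E)))$; soft $\mathfrak{a}$-$\beta$-open if $(G,E)\sqsubseteq\mathrm{cl}_{\mathfrak{a}}(\mathrm{int}_{\mathfrak{a}}(\mathrm{cl}_{\mathfrak{a}}(G,E)))$. A soft mapping $f_{up}=(u,p)$ consists of $u:X\to Y$, $p:E\to K$, with $f_{up}^{-1}(V,K)=(H,E)$, $H(e)=u^{-1}(V(p(e)))$. $f_{up}$ is soft $\mathfrak{a}$-continuous (resp. $\mathfrak{a}$-semi-, $\mathfrak{a}$-pre-, $\mathfrak{a}$-$\alpha$-, $\mathfrak{a}$-$\beta$-continuous) if $f_{up}^{-1}(V,K)$ is soft $\mathfrak{a}$-open (resp. $\mathfrak{a}$-semi-open, $\mathfrak{a}$-pre-open, $\mathfrak{a}$-$\alpha$-open, $\mathfrak{a}$-$\beta$-open)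 for every soft $\mathfrak{b}$-open $(V,K)$ in $Y$. *)

theory Defs
  imports Main
begin

text \<open>Soft sets over a universe X with parameter set E are represented as functions
  F :: 'e => 'x set with F e a subset of X for e in E and F e = {} for e outside E.\<close>

definition soft_set :: "'x set \<Rightarrow> 'e set \<Rightarrow> ('e \<Rightarrow> 'x set) \<Rightarrow> bool" where
  "soft_set X E F \<longleftrightarrow> (\<forall>e\<in>E. F e \<subseteq> X) \<and> (\<forall>e. e \<notin> E \<longrightarrow> F e = {})"

definition soft_null :: "'e set \<Rightarrow> 'e \<Rightarrow> 'x set" where
  "soft_null E = (\<lambda>e. {})"

definition soft_absolute :: "'x set \<Rightarrow> 'e set \<Rightarrow> 'e \<Rightarrow> 'x set" where
  "soft_absolute X E = (\<lambda>e. if e \<in> E then X else {})"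

definition soft_subset :: "'e set \<Rightarrow> ('e \<Rightarrow> 'x set) \<Rightarrow> ('e \<Rightarrow> 'x set) \<Rightarrow> bool" where
  "soft_subset E F G \<longleftrightarrow> (\<forall>e\<in>E. F e \<subseteq> G e)"

definition soft_Union :: "'e set \<Rightarrow> ('e \<Rightarrow> 'x set) set \<Rightarrow> 'e \<Rightarrow> 'x set" where
  "soft_Union E \<F> = (\<lambda>e. if e \<in> E then (\<Union>F\<in>\<F>. F e) else {})"

definition soft_inter :: "'e set \<Rightarrow> ('e \<Rightarrow> 'x set) \<Rightarrow> ('e \<Rightarrow> 'x set) \<Rightarrow> 'e \<Rightarrow> 'x set" where
  "soft_inter E F G = (\<lambda>e. if e \<in> E then F e \<inter> G e else {})"

definition soft_topology :: "'x set \<Rightarrow> 'e set \<Rightarrow> ('e \<Rightarrow> 'x set) set \<Rightarrow> bool" where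
  "soft_topology X E \<T> \<longleftrightarrow>
     (\<forall>F\<in>\<T>. soft_set X E F) \<and>
     soft_null E \<in> \<T> \<and> soft_absolute X E \<in> \<T> \<and>
     (\<forall>\<F>. \<F> \<subseteq> \<T> \<longrightarrow> soft_Union E \<F> \<in> \<T>) \<and>
     (\<forall>F\<in>\<T>. \<forall>G\<in>\<T>. soft_inter E F G \<in> \<T>)"

definition soft_scope :: "'x set \<Rightarrow> 'e set \<Rightarrow> ('e \<Rightarrow> 'x set) set \<Rightarrow> ('x \<Rightarrow> 'e \<Rightarrow> 'x set) \<Rightarrow> bool" where
  "soft_scope X E \<T> a \<longleftrightarrow> (\<forall>x\<in>X. a x \<in> \<T> \<and> (\<forall>e\<in>E. x \<in> a x e))"

definition soft_aura_space :: "'x set \<Rightarrow> 'e set \<Rightarrow> ('e \<Rightarrow> 'x set) set \<Rightarrow> ('x \<Rightarrow> 'e \<Rightarrow> 'x set) \<Rightarrow> bool" where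
  "soft_aura_space X E \<T> a \<longleftrightarrow> X \<noteq> {} \<and> E \<noteq> {} \<and> soft_topology X E \<T> \<and> soft_scope X E \<T> a"

definition soft_cl :: "'x set \<Rightarrow> 'e set \<Rightarrow> ('x \<Rightarrow> 'e \<Rightarrow> 'x set) \<Rightarrow> ('e \<Rightarrow> 'x set) \<Rightarrow> 'e \<Rightarrow> 'x set" where
  "soft_cl X E a G = (\<lambda>e. if e \<in> E then {x\<in>X. a x e \<inter> G e \<noteq> {}} else {})"

definition soft_int :: "'x set \<Rightarrow> 'e set \<Rightarrow> ('x \<Rightarrow> 'e \<Rightarrow> 'x set) \<Rightarrow> ('e \<Rightarrow> 'x set) \<Rightarrow> 'e \<Rightarrow> 'x set" where
  "soft_int X E a G = (\<lambda>e. if e \<in> E then {x\<in>X. a x e \<subseteq> G e} else {})"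

definition soft_a_open where
  "soft_a_open X E a G \<longleftrightarrow> soft_set X E G \<and> soft_int X E a G = G"

definition soft_a_semi_open where
  "soft_a_semi_open X E a G \<longleftrightarrow> soft_set X E G \<and> soft_subset E G (soft_cl X E a (soft_int X E a G))"

definition soft_a_pre_open where
  "soft_a_pre_open X E a G \<longleftrightarrow> soft_set X E G \<and> soft_subset E G (soft_int X E a (soft_cl X E a G))"

definition soft_a_alpha_open where
  "soft_a_alpha_open X E a G \<longleftrightarrow> soft_set X E G \<and>
     soft_subset E G (soft_int X E a (soft_cl X E a (soft_int X E a G)))"

definition soft_a_beta_open where
  "soft_a_beta_open X E a G \<longleftrightarrow> soft_set X E G \<and>
     soft_subset E G (soft_cl X E a (soft_int X E a (soft_cl X E a G)))"

text \<open>Soft mapping f_up = (u,p): preimage of (V,K) is H e = u^-1 (V (p e)).\<close>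
definition soft_mapping :: "'x set \<Rightarrow> 'e set \<Rightarrow> 'y set \<Rightarrow> 'k set \<Rightarrow> ('x \<Rightarrow> 'y) \<Rightarrow> ('e \<Rightarrow> 'k) \<Rightarrow> bool" where
  "soft_mapping X E Y K u p \<longleftrightarrow> (\<forall>x\<in>X. u x \<in> Y) \<and> (\<forall>e\<in>E. p e \<in> K)"

definition soft_preimage :: "'x set \<Rightarrow> 'e set \<Rightarrow> ('x \<Rightarrow> 'y) \<Rightarrow> ('e \<Rightarrow> 'k) \<Rightarrow> ('k \<Rightarrow> 'y set) \<Rightarrow> 'e \<Rightarrow> 'x set" where
  "soft_preimage X E u p V = (\<lambda>e. if e \<in> E then {x\<in>X. u x \<in> V (p e)} else {})"

definition soft_a_continuous where
  "soft_a_continuous X E a Y K b u p \<longleftrightarrow>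
     (\<forall>V. soft_a_open Y K b V \<longrightarrow> soft_a_open X E a (soft_preimage X E u p V))"

definition soft_a_semi_continuous where
  "soft_a_semi_continuous X E a Y K b u p \<longleftrightarrow>
     (\<forall>V. soft_a_open Y K b V \<longrightarrow> soft_a_semi_open X E a (soft_preimage X E u p V))"

definition soft_a_pre_continuous where
  "soft_a_pre_continuous X E a Y K b u p \<longleftrightarrow>
     (\<forall>V. soft_a_open Y K b V \<longrightarrow> soft_a_pre_open X E a (soft_preimage X E u p V))"

definition soft_a_alpha_continuous where
  "soft_a_alpha_continuous X E a Y K b u p \<longleftrightarrow>
     (\<forall>V. soft_a_open Y K b V \<longrightarrow> soft_a_alpha_open X E a (soft_preimage X E u p V))"

definition soft_a_beta_continuous where
  "soft_a_beta_continuous X E a Y K b u p \<longleftrightarrow>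
     (\<forall>V. soft_a_open Y K b V \<longrightarrow> soft_a_beta_open X E a (soft_preimage X E u p V))"

end

theory Submission
  imports Defs
begin

text \<open>Because every point lies in its own aura, \<open>int\<^sub>a G \<sqsubseteq> G \<sqsubseteq> cl\<^sub>a G\<close>; together with the
  monotonicity of \<open>int\<^sub>a\<close> and \<open>cl\<^sub>a\<close> this yields the inclusions between the classes of
  soft \<open>a\<close>-open, \<open>\<alpha>\<close>-open, semi-open, pre-open and \<open>\<beta>\<close>-open sets, and preimages inherit them.\<close>

lemma soft_subset_trans: "soft_subset E F G \<Longrightarrow> soft_subset E G H \<Longrightarrow> soft_subset E F H"
  unfolding soft_subset_def by blast

lemma soft_int_mono: "soft_subset E G H \<Longrightarrow> soft_subset E (soft_int X E a G) (soft_int X E a H)"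
  unfolding soft_subset_def soft_int_def by auto

lemma soft_cl_mono: "soft_subset E G H \<Longrightarrow> soft_subset E (soft_cl X E a G) (soft_cl X E a H)"
  unfolding soft_subset_def soft_cl_def by auto

lemma soft_set_soft_int: "soft_set X E (soft_int X E a G)"
  unfolding soft_set_def soft_int_def by auto

lemma soft_int_subset:
  assumes "\<forall>x\<in>X. \<forall>e\<in>E. x \<in> a x e"
  shows "soft_subset E (soft_int X E a G) G"
  using assms unfolding soft_subset_def soft_int_def by auto

lemma soft_subset_cl:
  assumes "\<forall>x\<in>X. \<forall>e\<in>E. x \<in> a x e" and "soft_set X E G"
  shows "soft_subset E G (soft_cl X E a G)"
  using assms unfolding soft_subset_def soft_cl_def soft_set_def by fastforce

context
  fixes X :: "'x set" and E :: "'e set" and a :: "'x \<Rightarrow> 'e \<Rightarrow> 'x set"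
  assumes aura_refl: "\<forall>x\<in>X. \<forall>e\<in>E. x \<in> a x e"
begin

lemma soft_a_open_imp_alpha_open:
  assumes "soft_a_open X E a G"
  shows "soft_a_alpha_open X E a G"
proof -
  have G: "soft_set X E G" "soft_int X E a G = G"
    using assms by (auto simp: soft_a_open_def)
  have "soft_subset E G (soft_cl X E a G)"
    using soft_subset_cl[OF aura_refl G(1)] .
  then have "soft_subset E (soft_int X E a G) (soft_int X E a (soft_cl X E a (soft_int X E a G)))"
    using G(2) by (metis soft_int_mono)
  then show ?thesis
    using G by (simp add: soft_a_alpha_open_def)
qed

lemma soft_a_alpha_open_imp_semi_open:
  assumes "soft_a_alpha_open X E a G"
  shows "soft_a_semi_open X E a G"
  using assms soft_int_subset[OF aura_refl] soft_subset_trans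
  unfolding soft_a_alpha_open_def soft_a_semi_open_def by blast

lemma soft_a_alpha_open_imp_pre_open:
  assumes "soft_a_alpha_open X E a G"
  shows "soft_a_pre_open X E a G"
proof -
  have "soft_subset E (soft_int X E a (soft_cl X E a (soft_int X E a G)))
      (soft_int X E a (soft_cl X E a G))"
    by (intro soft_int_mono soft_cl_mono soft_int_subset[OF aura_refl])
  then show ?thesis
    using assms soft_subset_trans unfolding soft_a_alpha_open_def soft_a_pre_open_def by blast
qed

lemma soft_a_semi_open_imp_beta_open:
  assumes "soft_a_semi_open X E a G"
  shows "soft_a_beta_open X E a G"
proof -
  have G: "soft_set X E G"
    using assms by (simp add: soft_a_semi_open_def)
  have "soft_subset E (soft_cl X E a (soft_int X E a G))
      (soft_cl X E a (soft_int X E a (soft_cl X E a G)))"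
    by (intro soft_cl_mono soft_int_mono soft_subset_cl[OF aura_refl G])
  then show ?thesis
    using assms soft_subset_trans unfolding soft_a_semi_open_def soft_a_beta_open_def by blast
qed

lemma soft_a_pre_open_imp_beta_open:
  assumes "soft_a_pre_open X E a G"
  shows "soft_a_beta_open X E a G"
  using assms soft_subset_cl[OF aura_refl soft_set_soft_int] soft_subset_trans
  unfolding soft_a_pre_open_def soft_a_beta_open_def by blast

end

theorem theorem5p2:
  fixes X :: "'x set" and E :: "'e set" and TX :: "('e \<Rightarrow> 'x set) set"
    and a :: "'x \<Rightarrow> 'e \<Rightarrow> 'x set"
    and Y :: "'y set" and K :: "'k set" and TY :: "('k \<Rightarrow> 'y set) set"
    and b :: "'y \<Rightarrow> 'k \<Rightarrow> 'y set"
    and u :: "'x \<Rightarrow> 'y" and p :: "'e \<Rightarrow> 'k"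
  assumes "soft_aura_space X E TX a"
    and "soft_aura_space Y K TY b"
    and "soft_mapping X E Y K u p"
  shows "(soft_a_continuous X E a Y K b u p \<longrightarrow> soft_a_alpha_continuous X E a Y K b u p)
    \<and> (soft_a_alpha_continuous X E a Y K b u p \<longrightarrow>
         soft_a_semi_continuous X E a Y K b u p \<and> soft_a_pre_continuous X E a Y K b u p)
    \<and> (soft_a_semi_continuous X E a Y K b u p \<or> soft_a_pre_continuous X E a Y K b u p \<longrightarrow>
         soft_a_beta_continuous X E a Y K b u p)"
proof -
  have aura_refl: "\<forall>x\<in>X. \<forall>e\<in>E. x \<in> a x e"
    using assms(1) by (simp add: soft_aura_space_def soft_scope_def)
  show ?thesis
    unfolding soft_a_continuous_def soft_a_alpha_continuous_def soft_a_semi_continuous_def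
      soft_a_pre_continuous_def soft_a_beta_continuous_def
    using soft_a_open_imp_alpha_open[OF aura_refl] soft_a_alpha_open_imp_semi_open[OF aura_refl]
      soft_a_alpha_open_imp_pre_open[OF aura_refl] soft_a_semi_open_imp_beta_open[OF aura_refl]
      soft_a_pre_open_imp_beta_open[OF aura_refl]
    by blast
qed

end
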